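(* Let $\psi$ be a formula not containing $\mathbin{\&}$, let $I$ be an interpretation that interprets equality as identity, and let $\sigma$ be an assignment with $\sigma,I\models_P\psi$ and $MFA(\sigma)$. Then there exists an assignment $\sigma^\ddagger\subseteq\sigma$ such that $\sigma^\ddagger,I\models_S\psi^S\mathbin{\&}SFA(\psi)$.
   Context: Fix a set $\mathcal X$ of synchronisation variables and, for each $x\in\mathcal X$, a distinct data flow variable $\hat x$; $\hat{\mathcal X}=\{\hat x: x\in\mathcal X\}$. Fix function symbols $\mathcal F$ and predicate symbols $\mathcal P$ (with arities), $\mathcal P$ containing binary equality $=$; $\mathcal D$ is the set of ground terms over $\mathcal F$. Formulas: $\psi ::= \top \mid x \mid \psi_1\wedge\psi_2 \mid \psi_1\mathbin{\&}\psi_2 \mid \neg\psi \mid p(t_1,\dots,t_n)$, terms $t ::= \hat x \mid f(t_1,\dots,t_n)$. $\mathrm{fv}(\psi)$ is the set of variables of $\mathcal X\cup\hat{\mathcal X}$ occurring in $\psi$; $V(\psi)=\{x\in\mathcal X: x\in\mathrm{fv}(\psi)\text{ or }\hat x\in\mathrm{fv}(\psi)\}$. An assignment $\sigma$ is a partial map sending $x\in\mathcal X$ to $\{\mathrm{true},\mathrm{false}\}$ and $\hat x$ to $\mathcal D$; $\sigma\subseteq\sigma'$ means $\sigma'$ extends $\sigma$. An interpretation $I$ is a partial map from pairs $(p,(d_1,\dots,d_n))$ ($d_i\in\mathcal D$) to $\{\mathrm{true},\mathrm{false}\}$; it interprets equality as identity if $I(=,(d,d'))$ is $\mathrm{true}$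 when $d=d'$ and $\mathrm{false}$ otherwise. $\mathrm{Val}_\sigma(\hat x)=\sigma(\hat x)$, $\mathrm{Val}_\sigma(f(\vec t))=f(\mathrm{Val}_\sigma(t_1),\dots)$, undefined if an argument is. Partial satisfaction $\models_P$ / dissatisfaction $\mathrel{=\!\!|}_P$ (for $\mathbin{\&}$-free formulas): $\models_P\top$ always; $\models_P x$ iff $\sigma(x)=\mathrm{true}$; $\models_P\psi_1\wedge\psi_2$ iff both; $\models_P\neg\psi$ iff $\mathrel{=\!\!|}_P\psi$; $\models_P p(\vec t)$ iff all $\mathrm{Val}_\sigma(t_i)$ defined and $I(p,(\mathrm{Val}_\sigma(t_i))_i)=\mathrm{true}$; $\mathrel{=\!\!|}_P\top$ never; $\mathrel{=\!\!|}_P x$ iff $\sigma(x)=\mathrm{false}$; $\mathrel{=\!\!|}_P\psi_1\wedge\psi_2$ iff one conjunct is dissatisfied; $\mathrel{=\!\!|}_P\neg\psi$ iff $\models_P\psi$; $\mathrel{=\!\!|}_P p(\vec t)$ iff all values defined and $I(\dots)=\mathrm{false}$. $MFA(\sigma)$: for all $x\in\mathcal X$, $\sigma(\hat x)$ defined implies $\sigma(x)=\mathrm{true}$. Simple satisfaction $\models_S$ / dissatisfaction $\mathrel{=\!\!|}_S$ ($\sigma_1\frown\sigma_2$ means they agree on their common domain): $\sigma,I\models_S\top$ iff $\sigma=\emptyset$; $\models_S x$ iff $\sigma=\{x\mapsto\mathrm{true}\}$; $\models_S\psi_1\wedge\psi_2$ iff $\sigma=\sigma_1\cup\sigma_2$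 with $\sigma_1\frown\sigma_2$, $\sigma_i,I\models_S\psi_i$; $\models_S\psi_1\mathbin{\&}\psi_2$ iff $\sigma$ satisfies both; $\models_S\neg\psi$ iff $\mathrel{=\!\!|}_S\psi$; $\models_S p(\vec t)$ iff all values defined, $I(p,\dots)=\mathrm{true}$ and $\mathrm{dom}(\sigma)=\mathrm{fv}(p(\vec t))$. $\mathrel{=\!\!|}_S\top$ never; $\mathrel{=\!\!|}_S x$ iff $\sigma=\{x\mapsto\mathrm{false}\}$; $\sigma,I\mathrel{=\!\!|}_S\psi_1\wedge\psi_2$ iff for all $\sigma_1\frown\sigma_2$ with $\sigma=\sigma_1\cup\sigma_2$, $\sigma_1,I\mathrel{=\!\!|}_S\psi_1$ or $\sigma_2,I\mathrel{=\!\!|}_S\psi_2$; $\mathrel{=\!\!|}_S\psi_1\mathbin{\&}\psi_2$ iff $\sigma$ dissatisfies one; $\mathrel{=\!\!|}_S\neg\psi$ iff $\models_S\psi$; $\mathrel{=\!\!|}_S p(\vec t)$ iff all values defined, $I(\dots)=\mathrm{false}$ and $\mathrm{dom}(\sigma)=\mathrm{fv}(p(\vec t))$. $\psi_1\oplus\psi_2:=\neg(\neg\psi_1\mathbin{\&}\neg\psi_2)$; $SFA(x):=\top\oplus x\oplus\neg x\oplus(x\wedge(\hat x=\hat x))\oplus(\hat x=\hat x)$; $SFA(\psi):=\bigwedge_{x\in V(\psi)}SFA(x)$ (overlapping conjunction; $\top$ if $V(\psi)=\emptyset$). A subformula occurrence is in a negative position if it lies within the scope of an odd number of negations, otherwise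 positive; $\psi^S$ is obtained from $\psi$ by replacing every $\wedge$ in a negative position by $\mathbin{\&}$. *)

theory Defs
  imports Main
begin

(* Synchronisation variables have type 'x; SV x is x, DV x is the data flow variable x-hat. *)
datatype 'x var = SV 'x | DV 'x

(* Terms: TV x stands for the data flow variable x-hat. *)
datatype ('x, 'f) trm = TV 'x | Fn 'f "('x, 'f) trm list"

(* Ground terms over the function symbols (the data domain D, up to arity well-formedness). *)
datatype 'f gterm = GFn 'f "'f gterm list"

datatype 'p psym = EqP | PSym 'p

datatype ('x, 'f, 'p) form =
    Top
  | SVar 'x
  | And "('x, 'f, 'p) form" "('x, 'f, 'p) form"
  | Amp "('x, 'f, 'p) form" "('x, 'f, 'p) form"
  | Neg "('x, 'f, 'p) form"
  | Pred "'p psym" "('x, 'f) trm list"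

datatype 'f val = B bool | D "'f gterm"

type_synonym ('x, 'f) assignment = "'x var \<Rightarrow> 'f val option"
type_synonym ('f, 'p) interp = "'p psym \<times> 'f gterm list \<Rightarrow> bool option"

fun psym_ar :: "('p \<Rightarrow> nat) \<Rightarrow> 'p psym \<Rightarrow> nat" where
  "psym_ar arP EqP = 2"
| "psym_ar arP (PSym p) = arP p"

fun wf_gterm :: "('f \<Rightarrow> nat) \<Rightarrow> 'f gterm \<Rightarrow> bool" where
  "wf_gterm arF (GFn f ds) = (length ds = arF f \<and> (\<forall>d \<in> set ds. wf_gterm arF d))"

fun wf_trm :: "('f \<Rightarrow> nat) \<Rightarrow> ('x, 'f) trm \<Rightarrow> bool" where
  "wf_trm arF (TV x) = True"
| "wf_trm arF (Fn f ts) = (length ts = arF f \<and> (\<forall>t \<in> set ts. wf_trm arF t))"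

fun wf_form :: "('f \<Rightarrow> nat) \<Rightarrow> ('p \<Rightarrow> nat) \<Rightarrow> ('x, 'f, 'p) form \<Rightarrow> bool" where
  "wf_form arF arP Top = True"
| "wf_form arF arP (SVar x) = True"
| "wf_form arF arP (And a b) = (wf_form arF arP a \<and> wf_form arF arP b)"
| "wf_form arF arP (Amp a b) = (wf_form arF arP a \<and> wf_form arF arP b)"
| "wf_form arF arP (Neg a) = wf_form arF arP a"
| "wf_form arF arP (Pred p ts) = (length ts = psym_ar arP p \<and> (\<forall>t \<in> set ts. wf_trm arF t))"

definition wf_assignment :: "('f \<Rightarrow> nat) \<Rightarrow> ('x, 'f) assignment \<Rightarrow> bool" where
  "wf_assignment arF \<sigma> \<longleftrightarrow>
     (\<forall>x. \<sigma> (SV x) = None \<or> (\<exists>b. \<sigma> (SV x) = Some (B b))) \<and>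
     (\<forall>x. \<sigma> (DV x) = None \<or> (\<exists>d. wf_gterm arF d \<and> \<sigma> (DV x) = Some (D d)))"

definition wf_interp :: "('f \<Rightarrow> nat) \<Rightarrow> ('p \<Rightarrow> nat) \<Rightarrow> ('f, 'p) interp \<Rightarrow> bool" where
  "wf_interp arF arP I \<longleftrightarrow>
     (\<forall>p ds. I (p, ds) \<noteq> None \<longrightarrow> length ds = psym_ar arP p \<and> (\<forall>d \<in> set ds. wf_gterm arF d))"

definition eq_identity :: "('f \<Rightarrow> nat) \<Rightarrow> ('f, 'p) interp \<Rightarrow> bool" where
  "eq_identity arF I \<longleftrightarrow>
     (\<forall>d d'. wf_gterm arF d \<and> wf_gterm arF d' \<longrightarrow> I (EqP, [d, d']) = Some (d = d'))"

fun amp_free :: "('x, 'f, 'p) form \<Rightarrow> bool" where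
  "amp_free Top = True"
| "amp_free (SVar x) = True"
| "amp_free (And a b) = (amp_free a \<and> amp_free b)"
| "amp_free (Amp a b) = False"
| "amp_free (Neg a) = amp_free a"
| "amp_free (Pred p ts) = True"

fun fv_trm :: "('x, 'f) trm \<Rightarrow> 'x var set" where
  "fv_trm (TV x) = {DV x}"
| "fv_trm (Fn f ts) = (\<Union>t \<in> set ts. fv_trm t)"

fun fv :: "('x, 'f, 'p) form \<Rightarrow> 'x var set" where
  "fv Top = {}"
| "fv (SVar x) = {SV x}"
| "fv (And a b) = fv a \<union> fv b"
| "fv (Amp a b) = fv a \<union> fv b"
| "fv (Neg a) = fv a"
| "fv (Pred p ts) = (\<Union>t \<in> set ts. fv_trm t)"

definition Vars :: "('x, 'f, 'p) form \<Rightarrow> 'x set" where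
  "Vars \<psi> = {x. SV x \<in> fv \<psi> \<or> DV x \<in> fv \<psi>}"

fun Val :: "('x, 'f) assignment \<Rightarrow> ('x, 'f) trm \<Rightarrow> 'f gterm option" where
  "Val \<sigma> (TV x) = (case \<sigma> (DV x) of Some (D d) \<Rightarrow> Some d | _ \<Rightarrow> None)"
| "Val \<sigma> (Fn f ts) = map_option (GFn f) (those (map (Val \<sigma>) ts))"

(* Partial satisfaction (pol = True) / dissatisfaction (pol = False), for &-free formulas *)
fun psat :: "bool \<Rightarrow> ('x, 'f) assignment \<Rightarrow> ('f, 'p) interp \<Rightarrow> ('x, 'f, 'p) form \<Rightarrow> bool" where
  "psat pol \<sigma> I Top = pol"
| "psat pol \<sigma> I (SVar x) = (\<sigma> (SV x) = Some (B pol))"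
| "psat True \<sigma> I (And a b) = (psat True \<sigma> I a \<and> psat True \<sigma> I b)"
| "psat False \<sigma> I (And a b) = (psat False \<sigma> I a \<or> psat False \<sigma> I b)"
| "psat pol \<sigma> I (Amp a b) = False"  (* not used: partial semantics is only for &-free formulas *)
| "psat pol \<sigma> I (Neg a) = psat (\<not> pol) \<sigma> I a"
| "psat pol \<sigma> I (Pred p ts) =
     (\<exists>ds. those (map (Val \<sigma>) ts) = Some ds \<and> I (p, ds) = Some pol)"

definition MFA :: "('x, 'f) assignment \<Rightarrow> bool" where
  "MFA \<sigma> \<longleftrightarrow> (\<forall>x. \<sigma> (DV x) \<noteq> None \<longrightarrow> \<sigma> (SV x) = Some (B True))"

definition compat :: "('x, 'f) assignment \<Rightarrow> ('x, 'f) assignment \<Rightarrow> bool" where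
  "compat \<sigma>1 \<sigma>2 \<longleftrightarrow> (\<forall>v \<in> dom \<sigma>1 \<inter> dom \<sigma>2. \<sigma>1 v = \<sigma>2 v)"

(* Simple satisfaction (pol = True) / dissatisfaction (pol = False); union of compatible maps is ++ *)
fun ssat :: "bool \<Rightarrow> ('x, 'f) assignment \<Rightarrow> ('f, 'p) interp \<Rightarrow> ('x, 'f, 'p) form \<Rightarrow> bool" where
  "ssat True \<sigma> I Top = (\<sigma> = Map.empty)"
| "ssat False \<sigma> I Top = False"
| "ssat pol \<sigma> I (SVar x) = (\<sigma> = [SV x \<mapsto> B pol])"
| "ssat True \<sigma> I (And a b) =
     (\<exists>\<sigma>1 \<sigma>2. compat \<sigma>1 \<sigma>2 \<and> \<sigma> = \<sigma>1 ++ \<sigma>2 \<and> ssat True \<sigma>1 I a \<and> ssat True \<sigma>2 I b)"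
| "ssat False \<sigma> I (And a b) =
     (\<forall>\<sigma>1 \<sigma>2. compat \<sigma>1 \<sigma>2 \<and> \<sigma> = \<sigma>1 ++ \<sigma>2 \<longrightarrow> ssat False \<sigma>1 I a \<or> ssat False \<sigma>2 I b)"
| "ssat True \<sigma> I (Amp a b) = (ssat True \<sigma> I a \<and> ssat True \<sigma> I b)"
| "ssat False \<sigma> I (Amp a b) = (ssat False \<sigma> I a \<or> ssat False \<sigma> I b)"
| "ssat pol \<sigma> I (Neg a) = ssat (\<not> pol) \<sigma> I a"
| "ssat pol \<sigma> I (Pred p ts) =
     (\<exists>ds. those (map (Val \<sigma>) ts) = Some ds \<and> I (p, ds) = Some pol \<and> dom \<sigma> = fv (Pred p ts))"

definition Oplus :: "('x, 'f, 'p) form \<Rightarrow> ('x, 'f, 'p) form \<Rightarrow> ('x, 'f, 'p) form" where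
  "Oplus a b = Neg (Amp (Neg a) (Neg b))"

(* SFA(x) = T (+) x (+) ~x (+) (x /\ (x^ = x^)) (+) (x^ = x^), (+) read right-associatively *)
definition SFA_var :: "'x \<Rightarrow> ('x, 'f, 'p) form" where
  "SFA_var x = Oplus Top (Oplus (SVar x) (Oplus (Neg (SVar x))
      (Oplus (And (SVar x) (Pred EqP [TV x, TV x])) (Pred EqP [TV x, TV x]))))"

fun bigAnd :: "('x, 'f, 'p) form list \<Rightarrow> ('x, 'f, 'p) form" where
  "bigAnd [] = Top"
| "bigAnd [a] = a"
| "bigAnd (a # as) = And a (bigAnd as)"

(* SFA(psi) = conjunction of SFA(x) over V(psi), in some fixed enumeration of V(psi) *)
definition SFA :: "('x, 'f, 'p) form \<Rightarrow> ('x, 'f, 'p) form" where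
  "SFA \<psi> = bigAnd (map SFA_var (SOME xs. distinct xs \<and> set xs = Vars \<psi>))"

(* psi^S: replace every /\ in a negative position by & ; pos = True means positive position *)
fun toS :: "bool \<Rightarrow> ('x, 'f, 'p) form \<Rightarrow> ('x, 'f, 'p) form" where
  "toS pos Top = Top"
| "toS pos (SVar x) = SVar x"
| "toS pos (And a b) = (if pos then And (toS pos a) (toS pos b) else Amp (toS pos a) (toS pos b))"
| "toS pos (Amp a b) = Amp (toS pos a) (toS pos b)"
| "toS pos (Neg a) = Neg (toS (\<not> pos) a)"
| "toS pos (Pred p ts) = Pred p ts"

definition formS :: "('x, 'f, 'p) form \<Rightarrow> ('x, 'f, 'p) form" where
  "formS \<psi> = toS True \<psi>"

end

theory Submission
  imports Defs
begin

(* A partially (dis)satisfying assignment sigma for an &-free formula psi contains a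
   sub-assignment that (dis)satisfies the simple-semantics version of psi and lives on fv(psi):
   this is proved by induction on psi, simultaneously for both polarities.  A positive conjunction
   takes the union of the two witnesses (they are compatible, being restrictions of one map); a
   negative conjunction becomes & in psi^S, so one witness for a single dissatisfied conjunct
   suffices; an atom p(t) keeps exactly sigma restricted to fv(p(t)).
   The same witness also satisfies SFA(psi): it splits into its restrictions to the pairs
   {x, x-hat} for x in V(psi), and each such piece is one of the five shapes allowed by SFA(x)
   (empty, x true, x false, x true together with x-hat, x-hat alone) -- the case "x false together
   with x-hat" is excluded by MFA(sigma), and x-hat = x-hat holds since equality is identity. *)

lemma those_map_SomeD:
  "those (map g ts) = Some ds \<Longrightarrow> t \<in> set ts \<Longrightarrow> \<exists>d. g t = Some d"
  by (induction ts arbitrary: ds) (auto split: option.splits)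

lemma Val_defined_fv:
  "Val \<sigma> t = Some d \<Longrightarrow> fv_trm t \<subseteq> dom \<sigma>"
proof (induction t arbitrary: d)
  case (TV x)
  then show ?case by (auto split: option.splits val.splits)
next
  case (Fn f ts)
  then obtain ds where "those (map (Val \<sigma>) ts) = Some ds" by auto
  with Fn.IH show ?case by (fastforce dest: those_map_SomeD)
qed

lemma Val_restrict:
  "fv_trm t \<subseteq> A \<Longrightarrow> Val (\<sigma> |` A) t = Val \<sigma> t"
proof (induction t)
  case (TV x)
  then show ?case by auto
next
  case (Fn f ts)
  then have "map (Val (\<sigma> |` A)) ts = map (Val \<sigma>) ts" by (intro map_cong) auto
  then show ?case by (simp del: map_eq_conv)
qed

(* Partial (dis)satisfaction of an &-free formula yields a sub-assignment on its free variables
   that simply (dis)satisfies its S-translation; pol = True is satisfaction, and the polarity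
   coincides with the position flag of toS. *)
lemma psat_imp_ssat_toS:
  assumes "amp_free \<psi>" and "psat pol \<sigma> I \<psi>"
  shows "\<exists>\<sigma>'. \<sigma>' \<subseteq>\<^sub>m \<sigma> \<and> dom \<sigma>' \<subseteq> fv \<psi> \<and> ssat pol \<sigma>' I (toS pol \<psi>)"
  using assms
proof (induction \<psi> arbitrary: pol)
  case Top
  then show ?case by (cases pol) (auto simp: map_le_def)
next
  case (SVar x)
  then show ?case
    by (intro exI[of _ "[SV x \<mapsto> B pol]"]) (auto simp: map_le_def split: if_splits)
next
  case (And a b)
  show ?case
  proof (cases pol)
    case True
    with And obtain \<sigma>1 \<sigma>2
      where \<sigma>1: "\<sigma>1 \<subseteq>\<^sub>m \<sigma>" "dom \<sigma>1 \<subseteq> fv a" "ssat True \<sigma>1 I (toS True a)"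
        and \<sigma>2: "\<sigma>2 \<subseteq>\<^sub>m \<sigma>" "dom \<sigma>2 \<subseteq> fv b" "ssat True \<sigma>2 I (toS True b)"
      by fastforce
    (* two restrictions of the same map agree wherever both are defined *)
    have compat: "compat \<sigma>1 \<sigma>2"
      using \<sigma>1(1) \<sigma>2(1) unfolding compat_def map_le_def by force
    have "\<sigma>1 ++ \<sigma>2 \<subseteq>\<^sub>m \<sigma>" using \<sigma>1(1) \<sigma>2(1) by (rule map_add_le_mapI)
    moreover have "ssat True (\<sigma>1 ++ \<sigma>2) I (toS True (And a b))"
      using compat \<sigma>1(3) \<sigma>2(3) by auto
    ultimately show ?thesis using True \<sigma>1(2) \<sigma>2(2) by auto
  next
    case False
    (* negative conjunction: one dissatisfied conjunct, and toS turns the conjunction into & *)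
    with And.prems have "psat False \<sigma> I a \<or> psat False \<sigma> I b" by simp
    with And False show ?thesis by fastforce
  qed
next
  case (Amp a b)
  then show ?case by simp
next
  case (Neg a)
  then show ?case by fastforce
next
  case (Pred p ts)
  let ?A = "fv (Pred p ts)"
  from Pred.prems obtain ds
    where ds: "those (map (Val \<sigma>) ts) = Some ds" "I (p, ds) = Some pol" by auto
  have "?A \<subseteq> dom \<sigma>"
    using ds(1) by (fastforce dest: those_map_SomeD Val_defined_fv)
  moreover have "map (Val (\<sigma> |` ?A)) ts = map (Val \<sigma>) ts"
    by (intro map_cong Val_restrict) auto
  ultimately have "ssat pol (\<sigma> |` ?A) I (Pred p ts)"
    using ds by (simp add: Int_absorb1 del: map_eq_conv)
  then show ?case by (intro exI[of _ "\<sigma> |` ?A"]) (auto simp: map_le_def)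
qed

lemma ssat_Oplus [simp]:
  "ssat True s I (Oplus a b) \<longleftrightarrow> ssat True s I a \<or> ssat True s I b"
  by (simp add: Oplus_def)

lemma wf_assignment_map_le:
  assumes "wf_assignment arF \<sigma>" and "s \<subseteq>\<^sub>m \<sigma>"
  shows "wf_assignment arF s"
proof -
  have "s v = None \<or> s v = \<sigma> v" for v
    using assms(2) by (cases "s v") (auto simp: map_le_def dom_def)
  then show ?thesis using assms(1) unfolding wf_assignment_def by metis
qed

lemma SFA_var_sat:
  assumes eq: "eq_identity arF I" and wf: "wf_assignment arF \<sigma>" and mfa: "MFA \<sigma>"
    and sub: "s \<subseteq>\<^sub>m \<sigma>" and dom: "dom s \<subseteq> {SV x, DV x}"
  shows "ssat True s I (SFA_var x)"
proof -
  have s_eq: "s = Map.empty(DV x := u, SV x := v)" if "s (DV x) = u" and "s (SV x) = v" for u v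
    using dom that by (intro ext) (auto simp: subset_iff dom_def)
  have "wf_assignment arF s" using wf sub by (rule wf_assignment_map_le)
  then have sv: "s (SV x) = None \<or> (\<exists>b. s (SV x) = Some (B b))"
    and dv: "s (DV x) = None \<or> (\<exists>d. wf_gterm arF d \<and> s (DV x) = Some (D d))"
    unfolding wf_assignment_def by blast+
  have refl: "ssat True [DV x \<mapsto> D d] I (Pred EqP [TV x, TV x])" if "wf_gterm arF d" for d
    using eq that by (simp add: eq_identity_def)
  show ?thesis
  proof (cases "s (DV x)")
    case None
    from sv consider "s (SV x) = None" | b where "s (SV x) = Some (B b)" by auto
    then show ?thesis
    proof cases
      case 1
      then have "s = Map.empty" using s_eq[OF None] by simp
      then show ?thesis unfolding SFA_var_def by simp
    next
      case (2 b)
      then have "s = [SV x \<mapsto> B b]" using s_eq[OF None] by simp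
      then show ?thesis unfolding SFA_var_def by (cases b) simp_all
    qed
  next
    case (Some v)
    with dv obtain d where d: "wf_gterm arF d" "s (DV x) = Some (D d)" by auto
    show ?thesis
    proof (cases "s (SV x)")
      case None
      then have "s = [DV x \<mapsto> D d]" using s_eq[OF d(2)] by simp
      then show ?thesis using refl[OF d(1)] unfolding SFA_var_def by simp
    next
      case (Some w)
      (* MFA forbids x false while x-hat is defined *)
      have "\<sigma> (DV x) = Some (D d)" "\<sigma> (SV x) = Some w"
        using sub d(2) Some unfolding map_le_def by (force simp: dom_def)+
      with mfa Some have "s (SV x) = Some (B True)" unfolding MFA_def by simp
      then have "s = [SV x \<mapsto> B True] ++ [DV x \<mapsto> D d]"
        using s_eq[OF d(2)] by (simp add: fun_upd_twist)
      moreover have "compat [SV x \<mapsto> B True] [DV x \<mapsto> D d]" by (simp add: compat_def)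
      ultimately have "ssat True s I (And (SVar x) (Pred EqP [TV x, TV x]))"
        using refl[OF d(1)] by fastforce
      then show ?thesis unfolding SFA_var_def by simp
    qed
  qed
qed

(* Such a sub-assignment living on the variables of xs satisfies the conjunction of their SFA's:
   split it into the part on {x, x-hat} for the head x and the rest. *)
lemma SFA_list_sat:
  assumes eq: "eq_identity arF I" and wf: "wf_assignment arF \<sigma>" and mfa: "MFA \<sigma>"
  shows "s \<subseteq>\<^sub>m \<sigma> \<Longrightarrow> dom s \<subseteq> (\<Union>x\<in>set xs. {SV x, DV x}) \<Longrightarrow>
    ssat True s I (bigAnd (map SFA_var xs))"
proof (induction xs arbitrary: s rule: induct_list012)
  case 1
  then show ?case by auto
next
  case (2 x)
  then show ?case using SFA_var_sat[OF eq wf mfa] by simp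
next
  case (3 x y xs)
  let ?A = "{SV x, DV x}"
  have sub: "s |` ?A \<subseteq>\<^sub>m \<sigma>" "s |` (- ?A) \<subseteq>\<^sub>m \<sigma>"
    using "3.prems"(1) by (auto simp: map_le_def)
  have split: "s = (s |` ?A) ++ (s |` (- ?A))"
    by (auto intro!: ext simp: map_add_def restrict_map_def split: option.splits)
  have "compat (s |` ?A) (s |` (- ?A))" by (auto simp: compat_def restrict_map_def)
  moreover have "ssat True (s |` ?A) I (SFA_var x)"
    using SFA_var_sat[OF eq wf mfa sub(1)] by auto
  moreover have "ssat True (s |` (- ?A)) I (bigAnd (map SFA_var (y # xs)))"
    using "3.IH"[OF sub(2)] "3.prems"(2) by auto
  ultimately have "ssat True s I (And (SFA_var x) (bigAnd (map SFA_var (y # xs))))"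
    using split by (simp only: ssat.simps(4)) blast
  then show ?case by simp
qed

(* V(psi) is finite, so SFA(psi) is a conjunction over an enumeration of all of V(psi). *)
lemma finite_fv_trm: "finite (fv_trm t)"
  by (induction t) auto

lemma finite_fv: "finite (fv \<psi>)"
  by (induction \<psi>) (auto simp: finite_fv_trm)

lemma finite_Vars: "finite (Vars \<psi>)"
proof -
  have "Vars \<psi> = SV -` fv \<psi> \<union> DV -` fv \<psi>" by (auto simp: Vars_def)
  then show ?thesis by (simp add: finite_vimageI finite_fv inj_on_def)
qed

lemma SFA_sat:
  assumes "eq_identity arF I" and "wf_assignment arF \<sigma>" and "MFA \<sigma>"
    and "s \<subseteq>\<^sub>m \<sigma>" and dom: "dom s \<subseteq> fv \<psi>"
  shows "ssat True s I (SFA \<psi>)"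
proof -
  define xs where "xs = (SOME xs. distinct xs \<and> set xs = Vars \<psi>)"
  obtain ys where "set ys = Vars \<psi> \<and> distinct ys"
    using finite_distinct_list[OF finite_Vars[of \<psi>]] ..
  then have "distinct ys \<and> set ys = Vars \<psi>" by auto
  then have "distinct xs \<and> set xs = Vars \<psi>" unfolding xs_def by (rule someI)
  then have xs: "set xs = Vars \<psi>" by (rule conjunct2)
  have "fv \<psi> \<subseteq> (\<Union>x\<in>Vars \<psi>. {SV x, DV x})"
  proof
    fix v assume "v \<in> fv \<psi>"
    then show "v \<in> (\<Union>x\<in>Vars \<psi>. {SV x, DV x})" by (cases v) (auto simp: Vars_def)
  qed
  with dom have "dom s \<subseteq> (\<Union>x\<in>set xs. {SV x, DV x})" unfolding xs by (rule order_trans)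
  then show ?thesis
    unfolding SFA_def xs_def[symmetric] by (rule SFA_list_sat[OF assms(1-4)])
qed

(* The witness of psat_imp_ssat_toS satisfies both psi^S and SFA(psi). *)
theorem mainTheorem6:
  fixes arF :: "'f \<Rightarrow> nat" and arP :: "'p \<Rightarrow> nat"
    and \<psi> :: "('x, 'f, 'p) form" and I :: "('f, 'p) interp" and \<sigma> :: "('x, 'f) assignment"
  assumes "wf_form arF arP \<psi>" and "amp_free \<psi>"
    and "wf_interp arF arP I" and "eq_identity arF I"
    and "wf_assignment arF \<sigma>"
    and "psat True \<sigma> I \<psi>" and "MFA \<sigma>"
  shows "\<exists>\<sigma>'. \<sigma>' \<subseteq>\<^sub>m \<sigma> \<and> ssat True \<sigma>' I (Amp (formS \<psi>) (SFA \<psi>))"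
proof -
  obtain \<sigma>' where sub: "\<sigma>' \<subseteq>\<^sub>m \<sigma>" and dom: "dom \<sigma>' \<subseteq> fv \<psi>"
    and S: "ssat True \<sigma>' I (formS \<psi>)"
    using psat_imp_ssat_toS[OF \<open>amp_free \<psi>\<close> \<open>psat True \<sigma> I \<psi>\<close>] unfolding formS_def by blast
  have "ssat True \<sigma>' I (SFA \<psi>)"
    using SFA_sat[OF \<open>eq_identity arF I\<close> \<open>wf_assignment arF \<sigma>\<close> \<open>MFA \<sigma>\<close> sub dom] .
  with sub S show ?thesis by auto
qed

end
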